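(* If $K_n\overset{hered}{\longrightarrow}K_c$ then $n\le c$. Consequently $\chi_{hered}(K_n)=n$.
   Context: $K_c$ is the complete graph on $c$ vertices; graphs are finite, loopless, with symmetric edge sets. For $|I|=N$, $|O|=m$ ($O=\{0,\dots,m-1\}$) let $\mathbb F(N,m)$ be the free product of $N$ copies of the cyclic group of order $m$ with generators $u_v$, $\mathbb C[\mathbb F(N,m)]$ its group $*$-algebra, $\omega=e^{2\pi i/m}$, $e_{v,a}=\frac1m\sum_{k=0}^{m-1}(\omega^{-a}u_v)^k$. For graphs $G,H$, the graph homomorphism game has $I=V(G)$, $O=V(H)$, $\lambda(v,w,a,b)=0$ iff ($v=w$, $a\ne b$) or ($(v,w)\in E(G)$, $(a,b)\notin E(H)$); $\mathcal I(G,H)$ is the two-sided $*$-ideal generated by $\{e_{v,a}e_{w,b}:\lambda(v,w,a,b)=0\}$. Let $\mathcal P$ be the cone of finite sums of $f^*f$; for self-adjoint $h,k$, $h\le k$ means $k-h\in\mathcal P$. A self-adjoint subspace $V$ is hereditary if $0\le f\le h\in V$ implies $f\in V$. $\mathcal I^h(G,H)$ is the smallest hereditary subspace containing $\mathcal I(G,H)$, and $\mathcal A^h(G,H)=\mathbb C[\mathbb F(N,m)]/\mathcal I^h(G,H)$. Write $G\overset{hered}{\longrightarrow}H$ if $\mathcal A^h(G,H)\ne0$, and $\chi_{hered}(G)=\min\{c:\mathcal A^h(G,K_c)\ne0\}$. *)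

theory Defs
  imports Complex_Main
begin

text \<open>A graph is a pair (n, E): vertex set {0..<n} and an edge relation E
  (loopless and symmetric for the graphs considered).\<close>
type_synonym graph = "nat \<times> (nat \<Rightarrow> nat \<Rightarrow> bool)"

definition complete_graph :: "nat \<Rightarrow> graph" ("K") where
  "K c = (c, \<lambda>a b. a \<noteq> b)"

section \<open>The group F(N,m): free product of N copies of Z/m, as reduced words\<close>

text \<open>A word is a list of pairs (v,k) meaning u_v^k. Reduced words: v < N,
  0 < k < m, adjacent letters have distinct generators.\<close>
type_synonym word = "(nat \<times> nat) list"

definition reduced :: "nat \<Rightarrow> nat \<Rightarrow> word \<Rightarrow> bool" where
  "reduced N m w \<longleftrightarrow> (\<forall>(v,k)\<in>set w. v < N \<and> 0 < k \<and> k < m) \<and>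
     (\<forall>i. Suc i < length w \<longrightarrow> fst (w ! i) \<noteq> fst (w ! Suc i))"

fun cons_red :: "nat \<Rightarrow> nat \<times> nat \<Rightarrow> word \<Rightarrow> word" where
  "cons_red m (v,k) w =
     (if k mod m = 0 then w else
      (case w of [] \<Rightarrow> [(v, k mod m)]
       | (v',k') # w' \<Rightarrow>
           (if v = v' then (if (k + k') mod m = 0 then w' else (v, (k + k') mod m) # w')
            else (v, k mod m) # w)))"

definition wmult :: "nat \<Rightarrow> word \<Rightarrow> word \<Rightarrow> word" where
  "wmult m x y = foldr (cons_red m) x y"

definition winv :: "nat \<Rightarrow> word \<Rightarrow> word" where
  "winv m w = rev (map (\<lambda>(v,k). (v, m - k)) w)"

definition Alg :: "nat \<Rightarrow> nat \<Rightarrow> (word \<Rightarrow> complex) set" where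
  "Alg N m = {f. finite {w. f w \<noteq> 0} \<and> (\<forall>w. f w \<noteq> 0 \<longrightarrow> reduced N m w)}"

definition azero :: "word \<Rightarrow> complex" where
  "azero = (\<lambda>_. 0)"

definition aone :: "word \<Rightarrow> complex" where
  "aone = (\<lambda>w. if w = [] then 1 else 0)"

definition delta :: "word \<Rightarrow> word \<Rightarrow> complex" where
  "delta x = (\<lambda>w. if w = x then 1 else 0)"

definition aadd :: "(word \<Rightarrow> complex) \<Rightarrow> (word \<Rightarrow> complex) \<Rightarrow> word \<Rightarrow> complex" where
  "aadd f g = (\<lambda>w. f w + g w)"

definition asub :: "(word \<Rightarrow> complex) \<Rightarrow> (word \<Rightarrow> complex) \<Rightarrow> word \<Rightarrow> complex" where
  "asub f g = (\<lambda>w. f w - g w)"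

definition ascale :: "complex \<Rightarrow> (word \<Rightarrow> complex) \<Rightarrow> word \<Rightarrow> complex" where
  "ascale c f = (\<lambda>w. c * f w)"

definition amult :: "nat \<Rightarrow> (word \<Rightarrow> complex) \<Rightarrow> (word \<Rightarrow> complex) \<Rightarrow> word \<Rightarrow> complex" where
  "amult m f g = (\<lambda>w. \<Sum>x\<in>{x. f x \<noteq> 0}. \<Sum>y\<in>{y. g y \<noteq> 0}.
                     if wmult m x y = w then f x * g y else 0)"

definition astar :: "nat \<Rightarrow> (word \<Rightarrow> complex) \<Rightarrow> word \<Rightarrow> complex" where
  "astar m f = (\<lambda>w. cnj (f (winv m w)))"

definition apow :: "nat \<Rightarrow> (word \<Rightarrow> complex) \<Rightarrow> nat \<Rightarrow> word \<Rightarrow> complex" where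
  "apow m f k = (amult m f ^^ k) aone"

definition ugen :: "nat \<Rightarrow> nat \<Rightarrow> word \<Rightarrow> complex" where
  "ugen m v = delta (cons_red m (v, 1) [])"

definition omega :: "nat \<Rightarrow> complex" where
  "omega m = cis (2 * pi / real m)"

definition eproj :: "nat \<Rightarrow> nat \<Rightarrow> nat \<Rightarrow> word \<Rightarrow> complex" where
  "eproj m v a = ascale (1 / of_nat m)
     (\<lambda>w. \<Sum>k<m. apow m (ascale (inverse (omega m) ^ a) (ugen m v)) k w)"

definition lam_zero :: "graph \<Rightarrow> graph \<Rightarrow> nat \<Rightarrow> nat \<Rightarrow> nat \<Rightarrow> nat \<Rightarrow> bool" where
  "lam_zero G H v w a b \<longleftrightarrow>
     (v = w \<and> a \<noteq> b) \<or> (snd G v w \<and> \<not> snd H a b)"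

definition game_gens :: "graph \<Rightarrow> graph \<Rightarrow> (word \<Rightarrow> complex) set" where
  "game_gens G H = {amult (fst H) (eproj (fst H) v a) (eproj (fst H) w b) | v w a b.
      v < fst G \<and> w < fst G \<and> a < fst H \<and> b < fst H \<and> lam_zero G H v w a b}"

inductive_set star_ideal :: "nat \<Rightarrow> nat \<Rightarrow> (word \<Rightarrow> complex) set \<Rightarrow> (word \<Rightarrow> complex) set"
  for N m S where
  gen: "x \<in> S \<Longrightarrow> x \<in> star_ideal N m S"
| zero: "azero \<in> star_ideal N m S"
| add: "x \<in> star_ideal N m S \<Longrightarrow> y \<in> star_ideal N m S \<Longrightarrow> aadd x y \<in> star_ideal N m S"
| scale: "x \<in> star_ideal N m S \<Longrightarrow> ascale c x \<in> star_ideal N m S"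
| left: "a \<in> Alg N m \<Longrightarrow> x \<in> star_ideal N m S \<Longrightarrow> amult m a x \<in> star_ideal N m S"
| right: "a \<in> Alg N m \<Longrightarrow> x \<in> star_ideal N m S \<Longrightarrow> amult m x a \<in> star_ideal N m S"
| star: "x \<in> star_ideal N m S \<Longrightarrow> astar m x \<in> star_ideal N m S"

definition game_ideal :: "graph \<Rightarrow> graph \<Rightarrow> (word \<Rightarrow> complex) set" where
  "game_ideal G H = star_ideal (fst G) (fst H) (game_gens G H)"

inductive_set pos_cone :: "nat \<Rightarrow> nat \<Rightarrow> (word \<Rightarrow> complex) set" for N m where
  zero: "azero \<in> pos_cone N m"
| step: "f \<in> Alg N m \<Longrightarrow> g \<in> pos_cone N m \<Longrightarrow>
           aadd (amult m (astar m f) f) g \<in> pos_cone N m"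

definition selfadj :: "nat \<Rightarrow> (word \<Rightarrow> complex) \<Rightarrow> bool" where
  "selfadj m f \<longleftrightarrow> astar m f = f"

definition ale :: "nat \<Rightarrow> nat \<Rightarrow> (word \<Rightarrow> complex) \<Rightarrow> (word \<Rightarrow> complex) \<Rightarrow> bool" where
  "ale N m h k \<longleftrightarrow> selfadj m h \<and> selfadj m k \<and> asub k h \<in> pos_cone N m"

definition hereditary :: "nat \<Rightarrow> nat \<Rightarrow> (word \<Rightarrow> complex) set \<Rightarrow> bool" where
  "hereditary N m V \<longleftrightarrow>
     V \<subseteq> Alg N m \<and> azero \<in> V \<and>
     (\<forall>x\<in>V. \<forall>y\<in>V. aadd x y \<in> V) \<and> (\<forall>c. \<forall>x\<in>V. ascale c x \<in> V) \<and>
     (\<forall>x\<in>V. astar m x \<in> V) \<and>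
     (\<forall>f h. f \<in> Alg N m \<longrightarrow> ale N m azero f \<longrightarrow> ale N m f h \<longrightarrow> h \<in> V \<longrightarrow> f \<in> V)"

definition hered_ideal :: "graph \<Rightarrow> graph \<Rightarrow> (word \<Rightarrow> complex) set" where
  "hered_ideal G H = \<Inter> {V. hereditary (fst G) (fst H) V \<and> game_ideal G H \<subseteq> V}"

text \<open>A^h(G,H) = Alg / I^h(G,H) is nonzero iff I^h(G,H) is a proper subspace.\<close>
definition hered_hom :: "graph \<Rightarrow> graph \<Rightarrow> bool" where
  "hered_hom G H \<longleftrightarrow> hered_ideal G H \<noteq> Alg (fst G) (fst H)"

definition chi_hered :: "graph \<Rightarrow> nat" where
  "chi_hered G = (LEAST c. 1 \<le> c \<and> hered_hom G (K c))"

end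

theory Submission
  imports Defs
begin

text \<open>Write \<open>e\<^sub>v\<^sub>,\<^sub>a\<close> for the projections and suppose \<open>n > c\<close>. For each colour \<open>a\<close> let
  \<open>q\<^sub>a = 1 - \<Sum>\<^sub>v e\<^sub>v\<^sub>,\<^sub>a\<close>. Since the \<open>e\<^sub>v\<^sub>,\<^sub>a\<close> are self-adjoint idempotents and
  \<open>\<Sum>\<^sub>a e\<^sub>v\<^sub>,\<^sub>a = 1\<close>, one gets \<open>\<Sum>\<^sub>a q\<^sub>a\<^sup>* q\<^sub>a + (n - c) 1 = \<Sum>\<^sub>a \<Sum>\<^sub>v\<^sub>\<noteq>\<^sub>w e\<^sub>v\<^sub>,\<^sub>a e\<^sub>w\<^sub>,\<^sub>a\<close>,
  an element of the game ideal. So \<open>0 \<le> (n - c) 1\<close> lies below an element of the ideal, and every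
  hereditary subspace containing the ideal contains \<open>1\<close>; it then contains every group element
  \<open>u\<close>, because \<open>0 \<le> 2 + \<lambda> u + (\<lambda> u)\<^sup>* \<le> 4\<close> for \<open>|\<lambda>| = 1\<close>. Hence \<open>A\<^sup>h(K\<^sub>n, K\<^sub>c) = 0\<close>.

  Conversely the character \<open>u\<^sub>v \<mapsto> \<omega>\<^sup>v\<close> of \<open>\<complex>[\<bbbF>(n, n)]\<close> sends \<open>e\<^sub>v\<^sub>,\<^sub>a\<close> to \<open>\<delta>\<^sub>v\<^sub>a\<close>, so it
  vanishes on the game ideal of \<open>K\<^sub>n \<rightarrow> K\<^sub>n\<close>; being positive, its kernel is hereditary, and it
  does not contain \<open>1\<close>.\<close>

section \<open>Reduced words\<close>

definition letter :: "nat \<Rightarrow> nat \<Rightarrow> nat \<Rightarrow> word" where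
  "letter m v k = cons_red m (v, k) []"

lemma letter_eq: "letter m v k = (if k mod m = 0 then [] else [(v, k mod m)])"
  by (simp add: letter_def)

lemma reduced_Nil [simp]: "reduced N m []"
  by (simp add: reduced_def)

lemma reduced_iff_successively:
  "reduced N m w \<longleftrightarrow> (\<forall>(v, k)\<in>set w. v < N \<and> 0 < k \<and> k < m) \<and>
     successively (\<lambda>x y. fst x \<noteq> fst y) w"
  by (simp add: reduced_def successively_conv_nth)

lemma reduced_Cons:
  "reduced N m ((v, k) # w) \<longleftrightarrow>
     v < N \<and> 0 < k \<and> k < m \<and> reduced N m w \<and> (w \<noteq> [] \<longrightarrow> v \<noteq> fst (hd w))"
  by (cases w) (auto simp: reduced_iff_successively)

lemma cons_red_reduced:
  assumes "0 < m" "v < N" "reduced N m w"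
  shows "reduced N m (cons_red m (v, k) w)"
  using assms by (cases w) (auto simp: reduced_Cons)

lemma wmult_Nil [simp]: "wmult m [] y = y"
  by (simp add: wmult_def)

lemma wmult_Cons [simp]: "wmult m (x # xs) y = cons_red m x (wmult m xs y)"
  by (simp add: wmult_def)

lemma wmult_reduced:
  assumes "0 < m" "reduced N m x" "reduced N m y"
  shows "reduced N m (wmult m x y)"
  using assms(2)
proof (induction x)
  case (Cons a x)
  then show ?case
    using assms by (cases a) (auto simp: reduced_Cons intro!: cons_red_reduced simp del: cons_red.simps)
qed (simp add: assms)

lemma wmult_Nil_right: "reduced N m w \<Longrightarrow> wmult m w [] = w"
proof (induction w)
  case (Cons a w)
  then show ?case by (cases a; cases w) (auto simp: reduced_Cons)
qed simp

lemma winv_Cons: "winv m ((v, k) # w) = winv m w @ [(v, m - k)]"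
  by (simp add: winv_def)

lemma reduced_winv_iff: "reduced N m (winv m w) \<longleftrightarrow> reduced N m w"
  by (fastforce simp: reduced_iff_successively winv_def successively_rev successively_map
      elim: successively_mono)

lemma winv_winv: "reduced N m w \<Longrightarrow> winv m (winv m w) = w"
  by (auto simp: reduced_iff_successively winv_def rev_map intro!: map_idI)

lemma winv_eq_iff: "reduced N m x \<Longrightarrow> winv m w = x \<longleftrightarrow> w = winv m x"
  by (metis reduced_winv_iff winv_winv)

lemma wmult_winv_left: "reduced N m w \<Longrightarrow> wmult m (winv m w) w = []"
proof (induction w)
  case (Cons a w)
  obtain v k where a: "a = (v, k)" by (cases a)
  with Cons.prems have "reduced N m w" "0 < k" "k < m" by (auto simp: reduced_Cons)
  moreover have "wmult m (winv m (a # w)) (a # w) =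
      wmult m (winv m w) (cons_red m (v, m - k) (a # w))"
    by (simp add: winv_Cons a wmult_def)
  ultimately show ?case using Cons.IH by (simp add: a)
qed (simp add: winv_def)

lemma letter_reduced: "0 < m \<Longrightarrow> v < N \<Longrightarrow> reduced N m (letter m v k)"
  by (simp add: letter_eq reduced_Cons)

lemma letter_0: "letter m v 0 = []"
  by (simp add: letter_eq)

lemma letter_add_period: "letter m v (k + m) = letter m v k"
  by (simp add: letter_eq)

lemma wmult_letter: "wmult m (letter m v k) y = cons_red m (v, k) y"
  by (cases y) (auto simp: letter_eq mod_add_left_eq)

lemma wmult_letter_letter: "0 < m \<Longrightarrow> wmult m (letter m v k) (letter m v l) = letter m v (k + l)"
  by (auto simp: wmult_letter letter_eq mod_add_right_eq add.commute)

lemma winv_letter: "0 < m \<Longrightarrow> winv m (letter m v k) = letter m v (m - k mod m)"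
  using mod_less_divisor[of m k] by (auto simp: letter_eq winv_def simp del: mod_less_divisor)

lemma winv_wmult_letter:
  assumes "0 < m" "k < m" "l < m"
  shows "winv m (wmult m (letter m v k) (letter m w l)) =
    wmult m (winv m (letter m w l)) (winv m (letter m v k))"
proof (cases "v = w")
  case True
  have "(m - (k + l) mod m) mod m = (m - l + (m - k)) mod m"
  proof (cases "k + l < m")
    case False
    then have "(k + l) mod m = k + l - m" using assms by (simp add: le_mod_geq)
    with False assms show ?thesis by (simp add: mod_if add.commute)
  qed (use assms in \<open>simp add: mod_if add.commute\<close>)
  then have "letter m v (m - (k + l) mod m) = letter m v (m - l + (m - k))"
    by (simp only: letter_eq)
  then show ?thesis
    using assms True by (simp add: wmult_letter_letter winv_letter del: cons_red.simps)
next
  case False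
  then show ?thesis using assms by (auto simp: letter_eq winv_def)
qed

definition supp :: "(word \<Rightarrow> complex) \<Rightarrow> word set" where
  "supp f = {w. f w \<noteq> 0}"

definition asum :: "'i set \<Rightarrow> ('i \<Rightarrow> word \<Rightarrow> complex) \<Rightarrow> word \<Rightarrow> complex" where
  "asum I f = (\<lambda>w. \<Sum>i\<in>I. f i w)"

lemma asum_cong: "(\<And>i. i \<in> I \<Longrightarrow> f i = g i) \<Longrightarrow> asum I f = asum I g"
  by (simp add: asum_def fun_eq_iff)

lemma amult_eq_sum:
  assumes "finite A" "finite B" "supp f \<subseteq> A" "supp g \<subseteq> B"
  shows "amult m f g w = (\<Sum>x\<in>A. \<Sum>y\<in>B. of_bool (wmult m x y = w) * f x * g y)"
proof -
  have "amult m f g w = (\<Sum>x\<in>supp f. \<Sum>y\<in>supp g. of_bool (wmult m x y = w) * f x * g y)"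
    unfolding amult_def supp_def by (intro sum.cong refl) auto
  also have "\<dots> = (\<Sum>x\<in>A. \<Sum>y\<in>supp g. of_bool (wmult m x y = w) * f x * g y)"
    by (rule sum.mono_neutral_left) (use assms in \<open>auto simp: supp_def\<close>)
  also have "\<dots> = (\<Sum>x\<in>A. \<Sum>y\<in>B. of_bool (wmult m x y = w) * f x * g y)"
    by (intro sum.cong refl sum.mono_neutral_left) (use assms in \<open>auto simp: supp_def\<close>)
  finally show ?thesis .
qed

lemma supp_aadd: "supp (aadd f g) \<subseteq> supp f \<union> supp g"
  by (auto simp: supp_def aadd_def)

lemma supp_asub: "supp (asub f g) \<subseteq> supp f \<union> supp g"
  by (auto simp: supp_def asub_def)

lemma supp_ascale: "supp (ascale c f) \<subseteq> supp f"
  by (auto simp: supp_def ascale_def)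

lemma supp_asum: "supp (asum I f) \<subseteq> (\<Union>i\<in>I. supp (f i))"
  by (auto simp: supp_def asum_def intro: sum.not_neutral_contains_not_neutral)

lemma supp_delta: "supp (delta x) = {x}"
  by (auto simp: supp_def delta_def)

lemma finite_supp_delta [simp]: "finite (supp (delta x))"
  by (simp add: supp_delta)

lemma finite_supp_aadd [simp]: "finite (supp f) \<Longrightarrow> finite (supp g) \<Longrightarrow> finite (supp (aadd f g))"
  by (rule finite_subset[OF supp_aadd]) simp

lemma finite_supp_asub [simp]: "finite (supp f) \<Longrightarrow> finite (supp g) \<Longrightarrow> finite (supp (asub f g))"
  by (rule finite_subset[OF supp_asub]) simp

lemma finite_supp_ascale [simp]: "finite (supp f) \<Longrightarrow> finite (supp (ascale c f))"
  by (rule finite_subset[OF supp_ascale])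

lemma finite_supp_asum [simp]:
  "finite I \<Longrightarrow> (\<And>i. i \<in> I \<Longrightarrow> finite (supp (f i))) \<Longrightarrow> finite (supp (asum I f))"
  by (rule finite_subset[OF supp_asum]) auto

lemma ascale_ascale: "ascale a (ascale b f) = ascale (a * b) f"
  by (simp add: ascale_def mult.assoc)

lemma aone_eq_delta: "aone = delta []"
  by (simp add: aone_def delta_def fun_eq_iff)

lemma aone_Nil [simp]: "aone [] = 1"
  by (simp add: aone_def)

lemma supp_aone: "supp aone = {[]}"
  by (simp add: aone_eq_delta supp_delta)

lemma finite_supp_aone [simp]: "finite (supp aone)"
  by (simp add: supp_aone)

lemma supp_amult: "supp (amult m f g) \<subseteq> (\<lambda>(x, y). wmult m x y) ` (supp f \<times> supp g)"
proof
  fix w assume "w \<in> supp (amult m f g)"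
  then obtain x y where "x \<in> supp f" "y \<in> supp g" "(if wmult m x y = w then f x * g y else 0) \<noteq> 0"
    unfolding amult_def supp_def[symmetric] unfolding supp_def[of "\<lambda>w. _ w"] mem_Collect_eq
    by (blast elim: sum.not_neutral_contains_not_neutral)
  then show "w \<in> (\<lambda>(x, y). wmult m x y) ` (supp f \<times> supp g)"
    by (auto split: if_splits)
qed

lemma amult_aadd_left:
  assumes "finite (supp f)" "finite (supp g)" "finite (supp h)"
  shows "amult m (aadd f g) h = aadd (amult m f h) (amult m g h)"
  using assms supp_aadd[of f g]
  by (auto simp: fun_eq_iff aadd_def amult_eq_sum[of "supp f \<union> supp g" "supp h"]
      algebra_simps sum.distrib)

lemma amult_aadd_right:
  assumes "finite (supp f)" "finite (supp g)" "finite (supp h)"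
  shows "amult m f (aadd g h) = aadd (amult m f g) (amult m f h)"
  using assms supp_aadd[of g h]
  by (auto simp: fun_eq_iff aadd_def amult_eq_sum[of "supp f" "supp g \<union> supp h"]
      algebra_simps sum.distrib)

lemma amult_asub_left:
  assumes "finite (supp f)" "finite (supp g)" "finite (supp h)"
  shows "amult m (asub f g) h = asub (amult m f h) (amult m g h)"
  using assms supp_asub[of f g]
  by (auto simp: fun_eq_iff asub_def amult_eq_sum[of "supp f \<union> supp g" "supp h"]
      algebra_simps sum_subtractf)

lemma amult_asub_right:
  assumes "finite (supp f)" "finite (supp g)" "finite (supp h)"
  shows "amult m f (asub g h) = asub (amult m f g) (amult m f h)"
  using assms supp_asub[of g h]
  by (auto simp: fun_eq_iff asub_def amult_eq_sum[of "supp f" "supp g \<union> supp h"]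
      algebra_simps sum_subtractf)

lemma amult_ascale_left:
  assumes "finite (supp f)" "finite (supp g)"
  shows "amult m (ascale c f) g = ascale c (amult m f g)"
  using assms supp_ascale[of c f]
  by (auto simp: fun_eq_iff ascale_def amult_eq_sum[of "supp f" "supp g"]
      sum_distrib_left algebra_simps)

lemma amult_ascale_right:
  assumes "finite (supp f)" "finite (supp g)"
  shows "amult m f (ascale c g) = ascale c (amult m f g)"
  using assms supp_ascale[of c g]
  by (auto simp: fun_eq_iff ascale_def amult_eq_sum[of "supp f" "supp g"]
      sum_distrib_left algebra_simps)

lemma amult_asum_left:
  assumes "finite I" "\<And>i. i \<in> I \<Longrightarrow> finite (supp (f i))" "finite (supp g)"
  shows "amult m (asum I f) g = asum I (\<lambda>i. amult m (f i) g)"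
proof (rule ext)
  fix w
  let ?A = "\<Union>i\<in>I. supp (f i)"
  have "amult m (f i) g w = (\<Sum>x\<in>?A. \<Sum>y\<in>supp g. of_bool (wmult m x y = w) * f i x * g y)"
    if "i \<in> I" for i
    using assms that by (intro amult_eq_sum) auto
  moreover have "amult m (asum I f) g w =
      (\<Sum>x\<in>?A. \<Sum>y\<in>supp g. of_bool (wmult m x y = w) * asum I f x * g y)"
    using assms supp_asum[of I f] by (intro amult_eq_sum) auto
  ultimately show "amult m (asum I f) g w = asum I (\<lambda>i. amult m (f i) g) w"
    by (simp add: asum_def sum_distrib_left sum_distrib_right sum.swap[of _ I])
qed

lemma amult_asum_right:
  assumes "finite I" "\<And>i. i \<in> I \<Longrightarrow> finite (supp (g i))" "finite (supp f)"
  shows "amult m f (asum I g) = asum I (\<lambda>i. amult m f (g i))"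
proof (rule ext)
  fix w
  let ?B = "\<Union>i\<in>I. supp (g i)"
  have "amult m f (g i) w = (\<Sum>x\<in>supp f. \<Sum>y\<in>?B. of_bool (wmult m x y = w) * f x * g i y)"
    if "i \<in> I" for i
    using assms that by (intro amult_eq_sum) auto
  moreover have "amult m f (asum I g) w =
      (\<Sum>x\<in>supp f. \<Sum>y\<in>?B. of_bool (wmult m x y = w) * f x * asum I g y)"
    using assms supp_asum[of I g] by (intro amult_eq_sum) auto
  ultimately show "amult m f (asum I g) w = asum I (\<lambda>i. amult m f (g i)) w"
    by (simp add: asum_def sum_distrib_left sum.swap[of _ I])
qed

lemma amult_delta: "amult m (delta x) (delta y) = delta (wmult m x y)"
proof (rule ext)
  fix w
  have "amult m (delta x) (delta y) w =
      (\<Sum>a\<in>{x}. \<Sum>b\<in>{y}. of_bool (wmult m a b = w) * delta x a * delta y b)"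
    by (rule amult_eq_sum) (simp_all add: supp_delta)
  then show "amult m (delta x) (delta y) w = delta (wmult m x y) w"
    by (simp add: delta_def)
qed

lemma astar_aadd: "astar m (aadd f g) = aadd (astar m f) (astar m g)"
  by (simp add: astar_def aadd_def fun_eq_iff)

lemma astar_asub: "astar m (asub f g) = asub (astar m f) (astar m g)"
  by (simp add: astar_def asub_def fun_eq_iff)

lemma astar_ascale: "astar m (ascale c f) = ascale (cnj c) (astar m f)"
  by (simp add: astar_def ascale_def fun_eq_iff)

lemma astar_asum: "astar m (asum I f) = asum I (\<lambda>i. astar m (f i))"
  by (simp add: astar_def asum_def fun_eq_iff)

lemma astar_azero: "astar m azero = azero"
  by (simp add: astar_def azero_def fun_eq_iff)

lemma astar_delta: "reduced N m x \<Longrightarrow> astar m (delta x) = delta (winv m x)"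
  by (auto simp: astar_def delta_def fun_eq_iff winv_eq_iff)

lemma astar_aone: "astar m aone = aone"
  by (simp add: aone_eq_delta astar_delta[of 0] winv_def)

lemma Alg_iff: "f \<in> Alg N m \<longleftrightarrow> finite (supp f) \<and> (\<forall>w\<in>supp f. reduced N m w)"
  by (simp add: Alg_def supp_def)

lemma finite_supp_Alg: "f \<in> Alg N m \<Longrightarrow> finite (supp f)"
  by (simp add: Alg_iff)

lemma Alg_aadd: "f \<in> Alg N m \<Longrightarrow> g \<in> Alg N m \<Longrightarrow> aadd f g \<in> Alg N m"
  using supp_aadd[of f g] by (auto simp: Alg_iff intro: finite_subset)

lemma Alg_asub: "f \<in> Alg N m \<Longrightarrow> g \<in> Alg N m \<Longrightarrow> asub f g \<in> Alg N m"
  using supp_asub[of f g] by (auto simp: Alg_iff intro: finite_subset)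

lemma Alg_ascale: "f \<in> Alg N m \<Longrightarrow> ascale c f \<in> Alg N m"
  using supp_ascale[of c f] by (auto simp: Alg_iff intro: finite_subset)

lemma Alg_asum: "finite I \<Longrightarrow> (\<And>i. i \<in> I \<Longrightarrow> f i \<in> Alg N m) \<Longrightarrow> asum I f \<in> Alg N m"
  using supp_asum[of I f] by (auto simp: Alg_iff intro: finite_subset)

lemma Alg_azero: "azero \<in> Alg N m"
  by (simp add: Alg_iff supp_def azero_def)

lemma Alg_delta: "reduced N m x \<Longrightarrow> delta x \<in> Alg N m"
  by (simp add: Alg_iff supp_delta)

lemma Alg_aone: "aone \<in> Alg N m"
  by (simp add: aone_eq_delta Alg_delta)

lemma Alg_amult:
  assumes "0 < m" "f \<in> Alg N m" "g \<in> Alg N m"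
  shows "amult m f g \<in> Alg N m"
proof -
  have "finite ((\<lambda>(x, y). wmult m x y) ` (supp f \<times> supp g))"
    using assms by (simp add: finite_supp_Alg)
  moreover have "\<forall>w\<in>(\<lambda>(x, y). wmult m x y) ` (supp f \<times> supp g). reduced N m w"
    using assms by (auto simp: Alg_iff intro: wmult_reduced)
  ultimately show ?thesis
    using supp_amult[of m f g] by (auto simp: Alg_iff intro: finite_subset)
qed

lemma supp_astar:
  assumes "f \<in> Alg N m"
  shows "supp (astar m f) = winv m ` supp f"
proof
  show "supp (astar m f) \<subseteq> winv m ` supp f"
  proof
    fix w assume "w \<in> supp (astar m f)"
    then have "winv m w \<in> supp f" by (simp add: supp_def astar_def)
    moreover from this have "w = winv m (winv m w)"
      using assms unfolding Alg_iff by (metis reduced_winv_iff winv_winv)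
    ultimately show "w \<in> winv m ` supp f" by blast
  qed
  show "winv m ` supp f \<subseteq> supp (astar m f)"
    using assms by (auto simp: Alg_iff supp_def astar_def winv_winv)
qed

lemma Alg_astar: "f \<in> Alg N m \<Longrightarrow> astar m f \<in> Alg N m"
  using supp_astar[of f N m] unfolding Alg_iff by (auto simp: reduced_winv_iff)

lemma sum_of_bool_eq_mult:
  fixes h :: "'a \<Rightarrow> 'b::semiring_1"
  assumes "finite A" "a \<in> A"
  shows "(\<Sum>x\<in>A. of_bool (x = a) * h x) = h a"
  using assms by (subst sum.remove[of A a]) auto

lemma sum_supp_of_bool_eq: "finite (supp g) \<Longrightarrow> (\<Sum>y\<in>supp g. of_bool (y = w) * g y) = g w"
  by (cases "w \<in> supp g") (auto simp: sum_of_bool_eq_mult supp_def sum.neutral)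

lemma amult_aone_left:
  assumes g: "finite (supp g)"
  shows "amult m aone g = g"
proof (rule ext)
  fix w
  have "amult m aone g w = (\<Sum>x\<in>{[]}. \<Sum>y\<in>supp g. of_bool (wmult m x y = w) * aone x * g y)"
    by (rule amult_eq_sum) (simp_all add: g supp_aone)
  also have "\<dots> = (\<Sum>y\<in>supp g. of_bool (y = w) * g y)"
    by simp
  also have "\<dots> = g w"
    by (rule sum_supp_of_bool_eq[OF g])
  finally show "amult m aone g w = g w" .
qed

lemma amult_aone_right:
  assumes g: "g \<in> Alg N m"
  shows "amult m g aone = g"
proof (rule ext)
  fix w
  have "amult m g aone w = (\<Sum>x\<in>supp g. \<Sum>y\<in>{[]}. of_bool (wmult m x y = w) * g x * aone y)"
    by (rule amult_eq_sum) (simp_all add: finite_supp_Alg[OF g] supp_aone)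
  also have "\<dots> = (\<Sum>x\<in>supp g. of_bool (x = w) * g x)"
  proof (intro sum.cong refl)
    fix x assume "x \<in> supp g"
    then have "reduced N m x" using g by (simp add: Alg_iff)
    then show "(\<Sum>y\<in>{[]}. of_bool (wmult m x y = w) * g x * aone y) = of_bool (x = w) * g x"
      by (simp add: wmult_Nil_right)
  qed
  also have "\<dots> = g w"
    by (rule sum_supp_of_bool_eq[OF finite_supp_Alg[OF g]])
  finally show "amult m g aone w = g w" .
qed

lemma inj_on_winv: "(\<And>x. x \<in> A \<Longrightarrow> reduced N m x) \<Longrightarrow> inj_on (winv m) A"
  by (metis inj_onI winv_winv)

text \<open>Words are only known to form a monoid with involution on the supports at hand, so
  the anti-multiplicativity of the involution is proved relative to that hypothesis.\<close>
lemma astar_amult: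
  assumes m: "0 < m" and f: "f \<in> Alg N m" and g: "g \<in> Alg N m"
    and anti: "\<And>x y. x \<in> supp f \<Longrightarrow> y \<in> supp g \<Longrightarrow>
      winv m (wmult m x y) = wmult m (winv m y) (winv m x)"
  shows "astar m (amult m f g) = amult m (astar m g) (astar m f)"
proof (rule ext)
  fix w
  let ?A = "supp f" and ?B = "supp g"
  have redA: "\<And>x. x \<in> ?A \<Longrightarrow> reduced N m x" and redB: "\<And>y. y \<in> ?B \<Longrightarrow> reduced N m y"
    using f g by (auto simp: Alg_iff)
  have fin: "finite ?A" "finite ?B"
    using f g by (simp_all add: finite_supp_Alg)
  have swap: "wmult m (winv m y) (winv m x) = w \<longleftrightarrow> wmult m x y = winv m w"
    if "x \<in> ?A" "y \<in> ?B" for x y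
  proof -
    have "reduced N m (wmult m x y)" using that by (intro wmult_reduced m redA redB)
    then show ?thesis using anti[OF that] winv_eq_iff[of N m "wmult m x y" w] by metis
  qed
  have "amult m (astar m g) (astar m f) w = (\<Sum>y'\<in>winv m ` ?B. \<Sum>x'\<in>winv m ` ?A.
      of_bool (wmult m y' x' = w) * astar m g y' * astar m f x')"
    by (rule amult_eq_sum) (simp_all add: fin supp_astar[OF f] supp_astar[OF g])
  also have "\<dots> = (\<Sum>y\<in>?B. \<Sum>x\<in>?A.
      of_bool (wmult m (winv m y) (winv m x) = w) * cnj (g y) * cnj (f x))"
    by (simp only: sum.reindex[OF inj_on_winv[OF redB]] sum.reindex[OF inj_on_winv[OF redA]] comp_def)
      (intro sum.cong refl, simp add: astar_def winv_winv[OF redA] winv_winv[OF redB])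
  also have "\<dots> = (\<Sum>x\<in>?A. \<Sum>y\<in>?B. cnj (of_bool (wmult m x y = winv m w) * f x * g y))"
    by (subst sum.swap) (intro sum.cong refl, simp add: swap mult_ac)
  also have "\<dots> = cnj (\<Sum>x\<in>?A. \<Sum>y\<in>?B. of_bool (wmult m x y = winv m w) * f x * g y)"
    by (simp only: cnj_sum)
  also have "\<dots> = astar m (amult m f g) w"
    unfolding astar_def by (subst amult_eq_sum[OF fin order_refl order_refl]) (rule refl)
  finally show "astar m (amult m f g) w = amult m (astar m g) (astar m f) w" ..
qed

section \<open>Roots of unity\<close>

lemma omega_pow_eq_cis: "omega m ^ k = cis (2 * pi * real k / real m)"
  by (simp add: omega_def DeMoivre mult_ac)

lemma omega_pow_order: "0 < m \<Longrightarrow> omega m ^ m = 1"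
  by (simp add: omega_pow_eq_cis)

lemma omega_pow_inj:
  assumes "k < m" "l < m" "omega m ^ k = omega m ^ l"
  shows "k = l"
  using bij_betw_imp_inj_on[OF bij_betw_roots_unity, of m] assms
  by (auto simp: inj_on_def omega_pow_eq_cis)

lemma omega_pow_mod: "0 < m \<Longrightarrow> omega m ^ (k mod m) = omega m ^ k"
  by (metis mod_mult_div_eq mult.commute omega_pow_order power_add power_mult power_one mult_1)

lemma sum_pow_root_of_unity:
  fixes y :: complex
  assumes "y ^ m = 1"
  shows "(\<Sum>k<m. y ^ k) = (if y = 1 then of_nat m else 0)"
  using assms by (simp add: sum_gp_strict)

lemma omega_pow_pow_order: "0 < m \<Longrightarrow> (omega m ^ j) ^ m = 1"
  by (metis mult.commute omega_pow_order power_mult power_one)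

lemma omega_inv_pow_pow: "(inverse (omega m) ^ a) ^ k = inverse ((omega m ^ a) ^ k)"
  by (simp add: power_inverse)

lemma omega_inv_pow_order: "0 < m \<Longrightarrow> (inverse (omega m) ^ a) ^ m = 1"
  by (simp add: omega_inv_pow_pow omega_pow_pow_order)

lemma cnj_omega: "cnj (omega m) = inverse (omega m)"
  by (simp add: omega_def cis_cnj)

lemma omega_pow_pow_eq_inv:
  assumes "0 < m" "k \<le> m"
  shows "(omega m ^ a) ^ k = (inverse (omega m) ^ a) ^ (m - k)"
proof -
  have "(omega m ^ a) ^ k * (omega m ^ a) ^ (m - k) = 1"
    using assms by (simp add: omega_pow_pow_order flip: power_add)
  then have "inverse ((omega m ^ a) ^ (m - k)) = (omega m ^ a) ^ k"
    by (intro inverse_unique) (simp add: mult.commute)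
  then show ?thesis
    by (simp add: power_inverse)
qed

lemma sum_omega_inv_pow_colours:
  assumes "0 < m" "k < m"
  shows "(\<Sum>a<m. (inverse (omega m) ^ a) ^ k) = (if k = 0 then of_nat m else 0)"
proof -
  let ?y = "inverse (omega m ^ k)"
  have "(inverse (omega m) ^ a) ^ k = ?y ^ a" for a
    by (simp add: power_inverse mult.commute flip: power_mult)
  moreover have "?y ^ m = 1"
    using assms by (simp add: power_inverse omega_pow_pow_order)
  moreover have "?y = 1 \<longleftrightarrow> k = 0"
    using omega_pow_inj[of k m 0] assms by auto
  ultimately show ?thesis
    using sum_pow_root_of_unity[of ?y m] by simp
qed

lemma sum_omega_inv_pow_omega_pow:
  assumes "0 < m" "v < m" "a < m"
  shows "(\<Sum>k<m. (inverse (omega m) ^ a) ^ k * omega m ^ (v * k)) = (if v = a then of_nat m else 0)"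
proof -
  let ?y = "inverse (omega m ^ a) * omega m ^ v"
  have "(inverse (omega m) ^ a) ^ k * omega m ^ (v * k) = ?y ^ k" for k
    by (simp add: power_mult_distrib power_inverse flip: power_mult)
  moreover have "?y ^ m = 1"
    using assms by (simp add: power_mult_distrib power_inverse omega_pow_pow_order)
  moreover have "?y = 1 \<longleftrightarrow> v = a"
    using omega_pow_inj[of v m a] assms by (auto simp: field_simps omega_def)
  ultimately show ?thesis
    using sum_pow_root_of_unity[of ?y m] by simp
qed

section \<open>The projections\<close>

lemma sum_lessThan_shift_periodic:
  fixes F :: "nat \<Rightarrow> 'a::cancel_comm_monoid_add"
  assumes "\<And>j. F (j + m) = F j"
  shows "(\<Sum>k<m. F (j + k)) = (\<Sum>k<m. F k)"
  using assms
proof (induction j arbitrary: F)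
  case (Suc j)
  have "\<And>i. F (Suc i + m) = F (Suc i)"
    using Suc.prems by blast
  then have "(\<Sum>k<m. F (Suc j + k)) = (\<Sum>k<m. F (Suc k))"
    using Suc.IH[of "\<lambda>i. F (Suc i)"] by simp
  also have "\<dots> = (\<Sum>k<m. F k)"
  proof -
    have "F 0 + (\<Sum>k<m. F (Suc k)) = F 0 + (\<Sum>k<m. F k)"
      using sum.lessThan_Suc_shift[of F m] Suc.prems[of 0] by (simp add: add.commute)
    then show ?thesis by simp
  qed
  finally show ?case .
qed simp

lemma sum_lessThan_reflect_periodic:
  fixes F :: "nat \<Rightarrow> 'a::cancel_comm_monoid_add"
  assumes "\<And>j. F (j + m) = F j"
  shows "(\<Sum>k<m. F (m - k)) = (\<Sum>k<m. F k)"
proof -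
  have "(\<Sum>k<m. F (m - k)) = (\<Sum>k<m. F (Suc (m - Suc k)))"
    by (intro sum.cong refl) (simp add: Suc_diff_Suc)
  also have "\<dots> = (\<Sum>k<m. F (1 + k))"
    by (subst sum.nat_diff_reindex) simp
  also have "\<dots> = (\<Sum>k<m. F k)"
    by (rule sum_lessThan_shift_periodic) (rule assms)
  finally show ?thesis .
qed

lemma apow_ascale_ugen:
  "0 < m \<Longrightarrow> apow m (ascale z (ugen m v)) k = ascale (z ^ k) (delta (letter m v k))"
proof (induction k)
  case 0
  show ?case by (simp add: apow_def aone_eq_delta letter_0 ascale_def)
next
  case (Suc k)
  have "apow m (ascale z (ugen m v)) (Suc k) =
      amult m (ascale z (delta (letter m v 1))) (ascale (z ^ k) (delta (letter m v k)))"
    using Suc by (simp add: apow_def ugen_def letter_def)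
  also have "\<dots> = ascale (z ^ Suc k) (delta (letter m v (Suc k)))"
    using wmult_letter_letter[OF Suc.prems, of v 1 k]
    by (simp add: amult_ascale_left amult_ascale_right amult_delta) (simp add: ascale_def fun_eq_iff)
  finally show ?case .
qed

lemma eproj_eq_asum:
  assumes "0 < m"
  shows "eproj m v a =
    asum {..<m} (\<lambda>k. ascale ((inverse (omega m) ^ a) ^ k / of_nat m) (delta (letter m v k)))"
  unfolding eproj_def apow_ascale_ugen[OF assms]
  by (simp add: fun_eq_iff asum_def ascale_def sum_distrib_left mult_ac)

lemma eproj_apply:
  assumes "0 < m"
  shows "eproj m v a w = (\<Sum>k<m. of_bool (letter m v k = w) * (inverse (omega m) ^ a) ^ k / of_nat m)"
  by (simp add: eproj_eq_asum[OF assms] asum_def ascale_def delta_def of_bool_def eq_commute[of w]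
      mult.commute)

lemma finite_supp_eproj: "0 < m \<Longrightarrow> finite (supp (eproj m v a))"
  by (simp add: eproj_eq_asum)

lemma supp_eproj: "0 < m \<Longrightarrow> supp (eproj m v a) \<subseteq> letter m v ` {..<m}"
  by (force simp: supp_def eproj_apply elim: sum.not_neutral_contains_not_neutral)

lemma eproj_Alg: "0 < m \<Longrightarrow> v < N \<Longrightarrow> eproj m v a \<in> Alg N m"
  using supp_eproj[of m v a] by (auto simp: Alg_iff finite_supp_eproj letter_reduced)

lemma eproj_idem:
  assumes m: "0 < m"
  shows "amult m (eproj m v a) (eproj m v a) = eproj m v a"
proof (rule ext)
  fix w
  define c where "c k = (inverse (omega m) ^ a) ^ k / of_nat m" for k
  define F where "F k = of_bool (letter m v k = w) * c k" for k
  have F_periodic: "F (k + m) = F k" for k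
    using m by (simp add: F_def c_def letter_add_period power_add omega_inv_pow_order)
  have "amult m (eproj m v a) (eproj m v a) =
      asum {..<m} (\<lambda>k. ascale (c k) (asum {..<m} (\<lambda>l. ascale (c l) (delta (letter m v (l + k))))))"
    by (simp add: eproj_eq_asum[OF m] c_def[symmetric] amult_asum_left amult_asum_right
        amult_ascale_left amult_ascale_right amult_delta wmult_letter_letter[OF m])
  then have "amult m (eproj m v a) (eproj m v a) w = (\<Sum>k<m. \<Sum>l<m. F (l + k) / of_nat m)"
    by (simp add: asum_def ascale_def delta_def F_def c_def sum_distrib_left power_add of_bool_def
        eq_commute[of w] mult_ac)
  also have "\<dots> = (\<Sum>k<m. (\<Sum>l<m. F l) / of_nat m)"
    by (simp add: sum_divide_distrib[symmetric] add.commute sum_lessThan_shift_periodic[where F = F, OF F_periodic])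
  also have "\<dots> = eproj m v a w"
    using m by (simp add: eproj_apply F_def c_def)
  finally show "amult m (eproj m v a) (eproj m v a) w = eproj m v a w" .
qed

lemma astar_eproj:
  assumes m: "0 < m"
  shows "astar m (eproj m v a) = eproj m v a"
proof (rule ext)
  fix w
  define F where "F k = of_bool (letter m v k = w) * (inverse (omega m) ^ a) ^ k / of_nat m" for k
  have F_periodic: "F (k + m) = F k" for k
    using m by (simp add: F_def letter_add_period power_add omega_inv_pow_order)
  have "astar m (eproj m v a) w = (\<Sum>k<m. F (m - k))"
  proof -
    have "letter m v k = winv m w \<longleftrightarrow> letter m v (m - k) = w" if "k < m" for k
    proof -
      have "reduced (Suc v) m (letter m v k)"
        by (rule letter_reduced[OF m lessI])
      then have "winv m w = letter m v k \<longleftrightarrow> w = winv m (letter m v k)"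
        by (rule winv_eq_iff)
      then show ?thesis
        using winv_letter[OF m, of v k] that by auto
    qed
    then show ?thesis
      using m by (auto simp: astar_def eproj_apply F_def cnj_omega omega_pow_pow_eq_inv intro!: sum.cong)
  qed
  also have "\<dots> = eproj m v a w"
    using sum_lessThan_reflect_periodic[where F = F, OF F_periodic] m by (simp add: F_def eproj_apply)
  finally show "astar m (eproj m v a) w = eproj m v a w" .
qed

lemma sum_eproj_colours:
  assumes m: "0 < m"
  shows "asum {..<m} (\<lambda>a. eproj m v a) = aone"
proof (rule ext)
  fix w
  have "asum {..<m} (\<lambda>a. eproj m v a) w =
      (\<Sum>a<m. \<Sum>k<m. of_bool (letter m v k = w) * (inverse (omega m) ^ a) ^ k / of_nat m)"
    by (simp add: asum_def eproj_apply[OF m])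
  also have "\<dots> = (\<Sum>k<m. of_bool (letter m v k = w) * (\<Sum>a<m. (inverse (omega m) ^ a) ^ k) / of_nat m)"
    by (subst sum.swap) (simp only: sum_distrib_left sum_divide_distrib mult.assoc times_divide_eq_right)
  also have "\<dots> = (\<Sum>k<m. if k = 0 then of_bool (letter m v k = w) else 0)"
    using m by (intro sum.cong refl) (simp add: sum_omega_inv_pow_colours)
  also have "\<dots> = aone w"
    using m by (simp add: sum.delta letter_0 aone_def eq_commute[of w])
  finally show "asum {..<m} (\<lambda>a. eproj m v a) w = aone w" .
qed

section \<open>The character sending \<open>u\<^sub>v\<close> to \<open>\<omega>\<^sup>v\<close>\<close>

definition wchar :: "nat \<Rightarrow> word \<Rightarrow> complex" where
  "wchar m w = prod_list (map (\<lambda>(v, k). omega m ^ (v * k)) w)"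

definition achar :: "nat \<Rightarrow> (word \<Rightarrow> complex) \<Rightarrow> complex" where
  "achar m f = (\<Sum>w\<in>supp f. f w * wchar m w)"

lemma wchar_Nil [simp]: "wchar m [] = 1"
  by (simp add: wchar_def)

lemma wchar_Cons [simp]: "wchar m ((v, k) # w) = omega m ^ (v * k) * wchar m w"
  by (simp add: wchar_def)

lemma wchar_append: "wchar m (x @ y) = wchar m x * wchar m y"
  by (simp add: wchar_def)

lemma omega_pow_mult_mod: "0 < m \<Longrightarrow> omega m ^ (v * (j mod m)) = omega m ^ (v * j)"
  by (metis mult.commute omega_pow_mod power_mult)

lemma wchar_cons_red:
  assumes m: "0 < m"
  shows "wchar m (cons_red m (v, k) w) = omega m ^ (v * k) * wchar m w"
proof -
  have "omega m ^ (v * k) * omega m ^ (v * k') = omega m ^ (v * ((k + k') mod m))" for k'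
    by (simp add: omega_pow_mult_mod[OF m] distrib_left power_add)
  then show ?thesis
    using omega_pow_mult_mod[OF m, of v k]
    by (cases w) (auto simp: mult.assoc)
qed

lemma wchar_wmult: "0 < m \<Longrightarrow> wchar m (wmult m x y) = wchar m x * wchar m y"
  by (induction x) (auto simp: wchar_cons_red mult.assoc simp del: cons_red.simps)

lemma wchar_winv:
  assumes m: "0 < m"
  shows "reduced N m w \<Longrightarrow> wchar m (winv m w) = cnj (wchar m w)"
proof (induction w)
  case (Cons x w)
  obtain v k where x: "x = (v, k)" by (cases x)
  with Cons.prems have "reduced N m w" "k \<le> m" by (auto simp: reduced_Cons)
  moreover have "omega m ^ (v * (m - k)) = cnj (omega m ^ (v * k))"
    using omega_pow_pow_eq_inv[OF m \<open>k \<le> m\<close>, of v]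
    by (simp add: cnj_omega power_inverse mult.commute flip: power_mult)
  ultimately show ?case
    using Cons.IH by (simp add: x winv_Cons wchar_append mult.commute)
qed (simp add: winv_def)

lemma wchar_letter: "0 < m \<Longrightarrow> wchar m (letter m v k) = omega m ^ (v * k)"
  using omega_pow_mult_mod[of m v k] by (auto simp: letter_eq)

lemma achar_eq_sum:
  assumes "finite A" "supp f \<subseteq> A"
  shows "achar m f = (\<Sum>w\<in>A. f w * wchar m w)"
  unfolding achar_def by (rule sum.mono_neutral_left) (use assms in \<open>auto simp: supp_def\<close>)

lemma achar_aadd:
  "finite (supp f) \<Longrightarrow> finite (supp g) \<Longrightarrow> achar m (aadd f g) = achar m f + achar m g"
  using supp_aadd[of f g]
  by (simp add: achar_eq_sum[of "supp f \<union> supp g"] aadd_def distrib_right sum.distrib)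

lemma achar_asub:
  "finite (supp f) \<Longrightarrow> finite (supp g) \<Longrightarrow> achar m (asub f g) = achar m f - achar m g"
  using supp_asub[of f g]
  by (simp add: achar_eq_sum[of "supp f \<union> supp g"] asub_def left_diff_distrib sum_subtractf)

lemma achar_ascale: "finite (supp f) \<Longrightarrow> achar m (ascale c f) = c * achar m f"
  using supp_ascale[of c f]
  by (simp add: achar_eq_sum[of "supp f"] ascale_def sum_distrib_left mult.assoc)

lemma achar_asum:
  assumes "finite I" "\<And>i. i \<in> I \<Longrightarrow> finite (supp (f i))"
  shows "achar m (asum I f) = (\<Sum>i\<in>I. achar m (f i))"
proof -
  let ?A = "\<Union>i\<in>I. supp (f i)"
  have "achar m (f i) = (\<Sum>w\<in>?A. f i w * wchar m w)" if "i \<in> I" for i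
    using assms that by (intro achar_eq_sum) auto
  moreover have "achar m (asum I f) = (\<Sum>w\<in>?A. asum I f w * wchar m w)"
    using assms supp_asum[of I f] by (intro achar_eq_sum) auto
  ultimately show ?thesis
    by (simp add: asum_def sum_distrib_right sum.swap[of _ I])
qed

lemma achar_delta: "achar m (delta x) = wchar m x"
  unfolding achar_def supp_delta by (simp add: delta_def)

lemma achar_azero: "achar m azero = 0"
  by (simp add: achar_def supp_def azero_def)

lemma achar_aone: "achar m aone = 1"
  by (simp add: aone_eq_delta achar_delta)

lemma achar_amult:
  assumes m: "0 < m" and fin: "finite (supp f)" "finite (supp g)"
  shows "achar m (amult m f g) = achar m f * achar m g"
proof -
  let ?W = "(\<lambda>(x, y). wmult m x y) ` (supp f \<times> supp g)"
  have "achar m (amult m f g) = (\<Sum>w\<in>?W. amult m f g w * wchar m w)"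
    using fin supp_amult[of m f g] by (intro achar_eq_sum) auto
  also have "\<dots> = (\<Sum>x\<in>supp f. \<Sum>y\<in>supp g. \<Sum>w\<in>?W. of_bool (wmult m x y = w) * f x * g y * wchar m w)"
    unfolding amult_eq_sum[OF fin order_refl order_refl] sum_distrib_right
    by (subst sum.swap, rule sum.cong[OF refl], rule sum.swap)
  also have "\<dots> = (\<Sum>x\<in>supp f. \<Sum>y\<in>supp g. f x * g y * wchar m (wmult m x y))"
  proof (intro sum.cong refl)
    fix x y assume "x \<in> supp f" "y \<in> supp g"
    then have "wmult m x y \<in> ?W" by force
    then show "(\<Sum>w\<in>?W. of_bool (wmult m x y = w) * f x * g y * wchar m w) =
        f x * g y * wchar m (wmult m x y)"
      using sum_of_bool_eq_mult[of ?W "wmult m x y" "\<lambda>w. f x * g y * wchar m w"] fin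
      by (simp add: eq_commute[of "wmult m x y"] mult.assoc)
  qed
  also have "\<dots> = achar m f * achar m g"
    by (simp add: achar_def wchar_wmult[OF m] sum_product mult_ac)
  finally show ?thesis .
qed

lemma achar_astar:
  assumes m: "0 < m" and f: "f \<in> Alg N m"
  shows "achar m (astar m f) = cnj (achar m f)"
proof -
  have red: "\<And>w. w \<in> supp f \<Longrightarrow> reduced N m w"
    using f by (simp add: Alg_iff)
  have "achar m (astar m f) = (\<Sum>w\<in>winv m ` supp f. astar m f w * wchar m w)"
    by (simp add: achar_def supp_astar[OF f])
  also have "\<dots> = (\<Sum>w\<in>supp f. cnj (f w * wchar m w))"
    by (simp add: sum.reindex inj_on_winv[OF red] astar_def winv_winv[OF red] wchar_winv[OF m red])
  also have "\<dots> = cnj (achar m f)"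
    by (simp add: achar_def)
  finally show ?thesis .
qed

lemma achar_eproj:
  assumes "0 < m" "v < m" "a < m"
  shows "achar m (eproj m v a) = of_bool (v = a)"
proof -
  have "achar m (eproj m v a) = (\<Sum>k<m. (inverse (omega m) ^ a) ^ k * omega m ^ (v * k)) / of_nat m"
    using assms(1)
    by (simp add: eproj_eq_asum achar_asum achar_ascale achar_delta wchar_letter
        sum_divide_distrib mult_ac)
  then show ?thesis
    using assms by (simp add: sum_omega_inv_pow_omega_pow)
qed

lemma pos_cone_achar:
  assumes m: "0 < m"
  shows "p \<in> pos_cone N m \<Longrightarrow> p \<in> Alg N m \<and> Im (achar m p) = 0 \<and> 0 \<le> Re (achar m p)"
proof (induction p rule: pos_cone.induct)
  case zero
  then show ?case by (simp add: Alg_azero achar_azero)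
next
  case (step f g)
  have f: "finite (supp f)" "finite (supp (astar m f))"
    using step.hyps(1) Alg_astar[OF step.hyps(1)] by (simp_all add: finite_supp_Alg)
  have ff: "amult m (astar m f) f \<in> Alg N m"
    using step.hyps(1) by (simp add: Alg_astar Alg_amult[OF m])
  have g: "finite (supp g)"
    using step.IH finite_supp_Alg by blast
  have "achar m (aadd (amult m (astar m f) f) g) = achar m (amult m (astar m f) f) + achar m g"
    by (rule achar_aadd[OF finite_supp_Alg[OF ff] g])
  also have "achar m (amult m (astar m f) f) = achar m (astar m f) * achar m f"
    by (rule achar_amult[OF m f(2) f(1)])
  also have "achar m (astar m f) = cnj (achar m f)"
    by (rule achar_astar[OF m step.hyps(1)])
  also have "cnj (achar m f) * achar m f = of_real ((cmod (achar m f))\<^sup>2)"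
    by (simp add: complex_norm_square[symmetric] mult.commute)
  finally show ?case
    using step Alg_aadd[OF ff] by auto
qed

section \<open>Hereditary subspaces\<close>

lemma hereditary_aadd: "hereditary N m V \<Longrightarrow> x \<in> V \<Longrightarrow> y \<in> V \<Longrightarrow> aadd x y \<in> V"
  by (simp add: hereditary_def)

lemma hereditary_ascale: "hereditary N m V \<Longrightarrow> x \<in> V \<Longrightarrow> ascale c x \<in> V"
  by (simp add: hereditary_def)

lemma hereditary_asub: "hereditary N m V \<Longrightarrow> x \<in> V \<Longrightarrow> y \<in> V \<Longrightarrow> asub x y \<in> V"
  using hereditary_aadd[of N m V x "ascale (-1) y"] hereditary_ascale[of N m V y "-1"]
  by (simp add: asub_def aadd_def ascale_def)

lemma hereditary_asum:
  assumes "hereditary N m V"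
  shows "finite I \<Longrightarrow> (\<And>i. i \<in> I \<Longrightarrow> f i \<in> V) \<Longrightarrow> asum I f \<in> V"
proof (induction I rule: finite_induct)
  case empty
  then show ?case using assms by (simp add: hereditary_def asum_def azero_def)
next
  case (insert i I)
  then have "asum (insert i I) f = aadd (f i) (asum I f)"
    by (simp add: asum_def aadd_def fun_eq_iff)
  with insert show ?case using hereditary_aadd[OF assms] by simp
qed

lemma hereditary_dominated:
  assumes "hereditary N m V" "f \<in> Alg N m" "selfadj m f" "f \<in> pos_cone N m"
    "h \<in> V" "selfadj m h" "asub h f \<in> pos_cone N m"
  shows "f \<in> V"
proof -
  have "asub f azero = f" by (simp add: asub_def azero_def)
  then have "ale N m azero f \<and> ale N m f h"
    using assms by (simp add: ale_def selfadj_def astar_azero)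
  then show ?thesis using assms unfolding hereditary_def by blast
qed

lemma pos_cone_square: "q \<in> Alg N m \<Longrightarrow> amult m (astar m q) q \<in> pos_cone N m"
  using pos_cone.step[OF _ pos_cone.zero, of q N m] by (simp add: aadd_def azero_def)

lemma pos_cone_asum_squares:
  "finite I \<Longrightarrow> (\<And>i. i \<in> I \<Longrightarrow> q i \<in> Alg N m) \<Longrightarrow>
     asum I (\<lambda>i. amult m (astar m (q i)) (q i)) \<in> pos_cone N m"
proof (induction I rule: finite_induct)
  case empty
  then show ?case using pos_cone.zero by (simp add: asum_def azero_def)
next
  case (insert i I)
  then have "asum (insert i I) (\<lambda>i. amult m (astar m (q i)) (q i)) =
      aadd (amult m (astar m (q i)) (q i)) (asum I (\<lambda>i. amult m (astar m (q i)) (q i)))"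
    by (simp add: asum_def aadd_def fun_eq_iff)
  with insert show ?case by (simp add: pos_cone.step)
qed

lemma star_ideal_subset_hereditary:
  assumes V: "hereditary N m V" "S \<subseteq> V"
    and left: "\<And>a x. a \<in> Alg N m \<Longrightarrow> x \<in> V \<Longrightarrow> amult m a x \<in> V"
    and right: "\<And>a x. a \<in> Alg N m \<Longrightarrow> x \<in> V \<Longrightarrow> amult m x a \<in> V"
  shows "star_ideal N m S \<subseteq> V"
proof
  fix x assume "x \<in> star_ideal N m S"
  then show "x \<in> V"
    by induction (use V left right in \<open>auto simp: hereditary_def\<close>)
qed

lemma hereditary_Alg: "hereditary N m (Alg N m)"
  by (auto simp: hereditary_def Alg_azero Alg_aadd Alg_ascale Alg_astar)

lemma game_ideal_subset_Alg:
  assumes "0 < fst H"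
  shows "game_ideal G H \<subseteq> Alg (fst G) (fst H)"
  unfolding game_ideal_def
proof (rule star_ideal_subset_hereditary[OF hereditary_Alg])
  show "game_gens G H \<subseteq> Alg (fst G) (fst H)"
    using assms by (auto simp: game_gens_def intro!: Alg_amult eproj_Alg)
qed (use assms in \<open>simp_all add: Alg_amult\<close>)

lemma hered_ideal_subset:
  "hereditary (fst G) (fst H) V \<Longrightarrow> game_ideal G H \<subseteq> V \<Longrightarrow> hered_ideal G H \<subseteq> V"
  unfolding hered_ideal_def by (rule Inter_lower) simp

lemma hereditary_ker_achar:
  assumes m: "0 < m"
  shows "hereditary N m {f \<in> Alg N m. achar m f = 0}"
  unfolding hereditary_def
proof (intro conjI allI impI ballI)
  fix f h
  assume f: "f \<in> Alg N m" and "ale N m azero f" "ale N m f h" and h: "h \<in> {f \<in> Alg N m. achar m f = 0}"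
  then have "asub f azero \<in> pos_cone N m" "asub h f \<in> pos_cone N m"
    by (simp_all add: ale_def)
  moreover have "asub f azero = f"
    by (simp add: asub_def azero_def)
  moreover have "achar m (asub h f) = - achar m f"
    using f h achar_asub[OF finite_supp_Alg finite_supp_Alg, of h N m f N m] by simp
  ultimately have "Im (achar m f) = 0" "0 \<le> Re (achar m f)" "0 \<le> - Re (achar m f)"
    using pos_cone_achar[OF m] by fastforce+
  then show "f \<in> {f \<in> Alg N m. achar m f = 0}"
    using f by (simp add: complex_eq_iff)
qed (auto simp: Alg_azero achar_azero Alg_aadd achar_aadd Alg_ascale achar_ascale Alg_astar
      achar_astar[OF m] finite_supp_Alg)

lemma fst_K [simp]: "fst (K n) = n"
  by (simp add: complete_graph_def)

lemma snd_K [simp]: "snd (K n) v w \<longleftrightarrow> v \<noteq> w"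
  by (simp add: complete_graph_def)

text \<open>The character sending every generator \<open>u\<^sub>v\<close> to \<open>\<omega>\<^sup>v\<close> kills every generator of the game
  ideal but not the unit, and its kernel is hereditary.\<close>
lemma hered_hom_K_self:
  assumes "1 \<le> n"
  shows "hered_hom (K n) (K n)"
proof -
  have n: "0 < n" using assms by simp
  define V where "V = {f \<in> Alg n n. achar n f = 0}"
  have hV: "hereditary n n V"
    unfolding V_def by (rule hereditary_ker_achar[OF n])
  have "game_gens (K n) (K n) \<subseteq> V"
    by (auto simp: game_gens_def lam_zero_def V_def Alg_amult[OF n] eproj_Alg[OF n]
        achar_amult[OF n] finite_supp_eproj[OF n] achar_eproj[OF n])
  moreover have "amult n a x \<in> V" "amult n x a \<in> V" if "a \<in> Alg n n" "x \<in> V" for a x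
    using that by (auto simp: V_def Alg_amult[OF n] achar_amult[OF n] finite_supp_Alg)
  ultimately have "game_ideal (K n) (K n) \<subseteq> V"
    unfolding game_ideal_def fst_K by (intro star_ideal_subset_hereditary[OF hV])
  then have "hered_ideal (K n) (K n) \<subseteq> V"
    by (intro hered_ideal_subset) (simp_all add: hV)
  moreover have "aone \<in> Alg n n - V"
    by (simp add: V_def Alg_aone achar_aone)
  ultimately show ?thesis
    unfolding hered_hom_def by auto
qed

section \<open>Hereditary subspaces containing the unit\<close>

definition herm_delta :: "nat \<Rightarrow> complex \<Rightarrow> word \<Rightarrow> word \<Rightarrow> complex" where
  "herm_delta m c u = aadd (ascale c (delta u)) (ascale (cnj c) (delta (winv m u)))"

lemma astar_herm_delta:
  assumes u: "reduced N m u"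
  shows "astar m (herm_delta m c u) = herm_delta m c u"
proof -
  have "reduced N m (winv m u)" using u by (simp add: reduced_winv_iff)
  then show ?thesis
    unfolding herm_delta_def astar_aadd astar_ascale astar_delta[OF u]
    by (simp add: astar_delta winv_winv[OF u] fun_eq_iff aadd_def ascale_def add.commute)
qed

lemma Alg_herm_delta: "reduced N m u \<Longrightarrow> herm_delta m c u \<in> Alg N m"
  by (simp add: herm_delta_def Alg_aadd Alg_ascale Alg_delta reduced_winv_iff)

lemma square_aone_plus_delta:
  assumes u: "reduced N m u" and c: "cmod c = 1"
  defines "q \<equiv> aadd aone (ascale c (delta u))"
  shows "amult m (astar m q) q = aadd (ascale 2 aone) (herm_delta m c u)"
proof -
  have u': "reduced N m (winv m u)" using u by (simp add: reduced_winv_iff)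
  have "astar m q = aadd aone (ascale (cnj c) (delta (winv m u)))"
    by (simp add: q_def astar_aadd astar_ascale astar_aone astar_delta[OF u])
  then have "amult m (astar m q) q =
      aadd (aadd (amult m aone aone) (amult m (ascale (cnj c) (delta (winv m u))) aone))
        (aadd (amult m aone (ascale c (delta u)))
          (amult m (ascale (cnj c) (delta (winv m u))) (ascale c (delta u))))"
    by (simp add: q_def amult_aadd_left amult_aadd_right)
  also have "\<dots> = aadd (aadd aone (ascale (cnj c) (delta (winv m u))))
        (aadd (ascale c (delta u)) (ascale (c * cnj c) aone))"
    by (simp add: amult_aone_left amult_aone_right[OF Alg_ascale[OF Alg_delta[OF u']]]
        amult_ascale_left amult_ascale_right amult_delta wmult_winv_left[OF u] ascale_ascale
        flip: aone_eq_delta)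
  also have "c * cnj c = 1"
    using c by (simp add: complex_norm_square[symmetric])
  finally show ?thesis
    by (simp add: herm_delta_def fun_eq_iff aadd_def ascale_def)
qed

text \<open>\<open>0 \<le> (1 + c u)\<^sup>* (1 + c u) = 2 + T\<close> and \<open>4 - (2 + T) = (1 - c u)\<^sup>* (1 - c u) \<ge> 0\<close>,
  where \<open>T = c u + (c u)\<^sup>*\<close>; so \<open>2 + T\<close> lies below \<open>4 \<in> V\<close>.\<close>
lemma hereditary_herm_delta:
  assumes V: "hereditary N m V" "aone \<in> V" and u: "reduced N m u" and c: "cmod c = 1"
  shows "herm_delta m c u \<in> V"
proof -
  let ?f = "aadd (ascale 2 aone) (herm_delta m c u)"
  have q: "aadd aone (ascale d (delta u)) \<in> Alg N m" for d
    by (intro Alg_aadd Alg_aone Alg_ascale Alg_delta u)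
  have "?f \<in> pos_cone N m"
    using pos_cone_square[OF q[of c]] square_aone_plus_delta[OF u c] by simp
  moreover have "asub (ascale 4 aone) ?f \<in> pos_cone N m"
  proof -
    have "asub (ascale 4 aone) ?f = aadd (ascale 2 aone) (herm_delta m (- c) u)"
      by (simp add: fun_eq_iff asub_def aadd_def ascale_def herm_delta_def)
    then show ?thesis
      using pos_cone_square[OF q[of "-c"]] square_aone_plus_delta[OF u, of "-c"] c by simp
  qed
  moreover have "selfadj m ?f" "selfadj m (ascale 4 aone)"
    by (simp_all add: selfadj_def astar_aadd astar_ascale astar_aone astar_herm_delta[OF u])
  moreover have "?f \<in> Alg N m"
    by (intro Alg_aadd Alg_ascale Alg_aone Alg_herm_delta u)
  ultimately have "?f \<in> V"
    using hereditary_dominated[OF V(1)] hereditary_ascale[OF V] by blast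
  then have "asub ?f (ascale 2 aone) \<in> V"
    by (intro hereditary_asub[OF V(1)] hereditary_ascale[OF V])
  then show ?thesis
    by (simp add: fun_eq_iff asub_def aadd_def ascale_def)
qed

lemma hereditary_aone_imp_Alg:
  assumes V: "hereditary N m V" "aone \<in> V"
  shows "Alg N m \<subseteq> V"
proof
  have delta: "delta u \<in> V" if u: "reduced N m u" for u
  proof -
    have "herm_delta m 1 u \<in> V" "herm_delta m \<i> u \<in> V"
      by (simp_all add: hereditary_herm_delta[OF V u])
    then have "ascale (1 / 2) (asub (herm_delta m 1 u) (ascale \<i> (herm_delta m \<i> u))) \<in> V"
      by (intro hereditary_ascale[OF V(1)] hereditary_asub[OF V(1)])
    then show ?thesis
      by (simp add: fun_eq_iff asub_def ascale_def herm_delta_def aadd_def algebra_simps)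
  qed
  fix f assume f: "f \<in> Alg N m"
  then have "asum (supp f) (\<lambda>w. ascale (f w) (delta w)) \<in> V"
    by (intro hereditary_asum[OF V(1)] hereditary_ascale[OF V(1)] delta) (auto simp: Alg_iff)
  moreover have "asum (supp f) (\<lambda>w. ascale (f w) (delta w)) = f"
  proof
    fix w
    have "asum (supp f) (\<lambda>w. ascale (f w) (delta w)) w = (\<Sum>y\<in>supp f. of_bool (y = w) * f y)"
      by (auto simp: asum_def ascale_def delta_def intro: sum.cong)
    then show "asum (supp f) (\<lambda>w. ascale (f w) (delta w)) w = f w"
      using sum_supp_of_bool_eq[OF finite_supp_Alg[OF f]] by simp
  qed
  ultimately show "f \<in> V" by simp
qed

section \<open>Fewer colours than vertices\<close>

lemma square_aone_minus_asum_idem: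
  assumes "finite I" and e: "\<And>i. i \<in> I \<Longrightarrow> e i \<in> Alg N m"
    and idem: "\<And>i. i \<in> I \<Longrightarrow> amult m (e i) (e i) = e i"
  defines "s \<equiv> asum I e"
  shows "amult m (asub aone s) (asub aone s) =
    aadd (asub aone s) (asum I (\<lambda>i. asum (I - {i}) (\<lambda>j. amult m (e i) (e j))))"
proof -
  have fin: "\<And>i. i \<in> I \<Longrightarrow> finite (supp (e i))"
    using e finite_supp_Alg by blast
  have s: "s \<in> Alg N m"
    unfolding s_def using assms by (intro Alg_asum)
  then have fin_s: "finite (supp s)"
    by (rule finite_supp_Alg)
  have "amult m s s = asum I (\<lambda>i. amult m (e i) s)"
    unfolding s_def[of] by (rule amult_asum_left[OF \<open>finite I\<close> fin fin_s[unfolded s_def]])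
  also have "\<dots> = asum I (\<lambda>i. asum I (\<lambda>j. amult m (e i) (e j)))"
    by (rule asum_cong) (simp add: s_def amult_asum_right[OF \<open>finite I\<close> fin fin])
  also have "\<dots> = aadd s (asum I (\<lambda>i. asum (I - {i}) (\<lambda>j. amult m (e i) (e j))))"
  proof -
    have "asum I (\<lambda>j. amult m (e i) (e j)) = aadd (e i) (asum (I - {i}) (\<lambda>j. amult m (e i) (e j)))"
      if "i \<in> I" for i
      using that assms by (simp add: fun_eq_iff asum_def aadd_def sum.remove)
    then show ?thesis
      by (simp add: s_def fun_eq_iff asum_def aadd_def sum.distrib cong: sum.cong)
  qed
  finally have ss: "amult m s s = \<dots>" .
  have "amult m (asub aone s) (asub aone s) = asub (asub aone s) (asub s (amult m s s))"
    by (simp add: amult_asub_left amult_asub_right fin_s amult_aone_left amult_aone_right[OF s])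
  then show ?thesis
    unfolding ss by (simp add: fun_eq_iff asub_def aadd_def)
qed

definition colour_defect :: "nat \<Rightarrow> nat \<Rightarrow> nat \<Rightarrow> word \<Rightarrow> complex" where
  "colour_defect n m a = asub aone (asum {..<n} (\<lambda>v. eproj m v a))"

definition colour_clashes :: "nat \<Rightarrow> nat \<Rightarrow> word \<Rightarrow> complex" where
  "colour_clashes n m = asum {..<m} (\<lambda>a. asum {..<n} (\<lambda>v. asum ({..<n} - {v})
     (\<lambda>w. amult m (eproj m v a) (eproj m w a))))"

lemma colour_defect_Alg: "0 < m \<Longrightarrow> colour_defect n m a \<in> Alg n m"
  unfolding colour_defect_def by (intro Alg_asub Alg_aone Alg_asum eproj_Alg) auto

lemma astar_colour_defect: "0 < m \<Longrightarrow> astar m (colour_defect n m a) = colour_defect n m a"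
  by (simp add: colour_defect_def astar_asub astar_aone astar_asum astar_eproj)

lemma supp_colour_defect:
  assumes m: "0 < m"
  shows "supp (colour_defect n m a) \<subseteq> (\<lambda>(v, k). letter m v k) ` (UNIV \<times> {..<m})"
proof -
  let ?L = "(\<lambda>(v, k). letter m v k) ` (UNIV \<times> {..<m})"
  have "supp (colour_defect n m a) \<subseteq> supp aone \<union> supp (asum {..<n} (\<lambda>v. eproj m v a))"
    unfolding colour_defect_def by (rule supp_asub)
  also have "\<dots> \<subseteq> {[]} \<union> (\<Union>v\<in>{..<n}. supp (eproj m v a))"
    unfolding supp_aone using supp_asum by (rule Un_mono[OF order_refl])
  also have "\<dots> \<subseteq> ?L"
  proof (intro Un_least UN_least)
    show "{[]} \<subseteq> ?L"
      using m by (auto intro!: rev_image_eqI[of "(0, 0)"] simp: letter_0)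
    show "supp (eproj m v a) \<subseteq> ?L" for v
      using supp_eproj[OF m, of v a] by auto
  qed
  finally show ?thesis .
qed

text \<open>Summing the squares of the defects over all colours leaves only the clashes
  \<open>e\<^sub>v\<^sub>,\<^sub>a e\<^sub>w\<^sub>,\<^sub>a\<close> (\<open>v \<noteq> w\<close>) and the constant \<open>m - n\<close>, because \<open>\<Sum>\<^sub>a e\<^sub>v\<^sub>,\<^sub>a = 1\<close> for every \<open>v\<close>.\<close>
lemma colour_clashes_eq:
  assumes m: "0 < m"
  shows "colour_clashes n m =
    aadd (asum {..<m} (\<lambda>a. amult m (colour_defect n m a) (colour_defect n m a)))
      (ascale (of_nat n - of_nat m) aone)"
proof (rule ext)
  fix x
  let ?s = "\<lambda>a. asum {..<n} (\<lambda>v. eproj m v a) x"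
  let ?G = "\<lambda>a. asum {..<n} (\<lambda>v. asum ({..<n} - {v}) (\<lambda>w. amult m (eproj m v a) (eproj m w a))) x"
  have "amult m (colour_defect n m a) (colour_defect n m a) x = aone x - ?s a + ?G a" for a
  proof -
    have "amult m (colour_defect n m a) (colour_defect n m a) = aadd (colour_defect n m a)
        (asum {..<n} (\<lambda>v. asum ({..<n} - {v}) (\<lambda>w. amult m (eproj m v a) (eproj m w a))))"
      unfolding colour_defect_def
      by (rule square_aone_minus_asum_idem[where I = "{..<n}" and e = "\<lambda>v. eproj m v a" and N = n])
        (simp_all add: eproj_Alg[OF m] eproj_idem[OF m])
    then show ?thesis
      by (simp add: colour_defect_def asub_def aadd_def)
  qed
  then have "(\<Sum>a<m. amult m (colour_defect n m a) (colour_defect n m a) x) =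
      of_nat m * aone x - (\<Sum>a<m. ?s a) + (\<Sum>a<m. ?G a)"
    by (simp add: sum.distrib sum_subtractf)
  also have "(\<Sum>a<m. ?s a) = of_nat n * aone x"
    using fun_cong[OF sum_eproj_colours[OF m]]
    unfolding asum_def by (subst sum.swap) simp
  finally show "colour_clashes n m x = aadd (asum {..<m} (\<lambda>a. amult m (colour_defect n m a)
      (colour_defect n m a))) (ascale (of_nat n - of_nat m) aone) x"
    by (simp add: colour_clashes_def aadd_def ascale_def asum_def[of "{..<m}"] algebra_simps)
qed

lemma colour_clashes_mem:
  assumes "hereditary n m V" "game_ideal (K n) (K m) \<subseteq> V"
  shows "colour_clashes n m \<in> V"
proof -
  have "amult m (eproj m v a) (eproj m w a) \<in> V" if "v < n" "w < n" "a < m" "v \<noteq> w" for v w a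
  proof -
    have "amult m (eproj m v a) (eproj m w a) \<in> game_gens (K n) (K m)"
      using that by (auto simp: game_gens_def lam_zero_def)
    then show ?thesis
      using assms(2) by (auto simp: game_ideal_def intro: star_ideal.gen)
  qed
  then show ?thesis
    unfolding colour_clashes_def
    by (intro hereditary_asum[OF assms(1)] finite_lessThan finite_Diff) simp_all
qed

lemma selfadj_square_colour_defect:
  assumes m: "0 < m"
  shows "selfadj m (amult m (colour_defect n m a) (colour_defect n m a))"
proof -
  have "winv m (wmult m x y) = wmult m (winv m y) (winv m x)"
    if x: "x \<in> supp (colour_defect n m a)" and y: "y \<in> supp (colour_defect n m a)" for x y
  proof -
    obtain v k where "x = letter m v k" "k < m"
      using subsetD[OF supp_colour_defect[OF m] x] by auto
    moreover obtain w l where "y = letter m w l" "l < m"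
      using subsetD[OF supp_colour_defect[OF m] y] by auto
    ultimately
    show ?thesis by (simp add: winv_wmult_letter[OF m])
  qed
  then show ?thesis
    unfolding selfadj_def
    by (simp add: astar_amult[OF m colour_defect_Alg[OF m] colour_defect_Alg[OF m]]
        astar_colour_defect[OF m])
qed

lemma pos_cone_scaled_aone:
  assumes "0 \<le> r"
  shows "ascale (of_real r) aone \<in> pos_cone N m"
proof -
  let ?q = "ascale (of_real (sqrt r)) aone"
  have "amult m (astar m ?q) ?q \<in> pos_cone N m"
    by (intro pos_cone_square Alg_ascale Alg_aone)
  moreover have "amult m (astar m ?q) ?q = ascale (of_real r) aone"
    using assms by (simp add: astar_ascale astar_aone amult_ascale_left amult_ascale_right
        amult_aone_left ascale_ascale flip: of_real_mult)
  ultimately show ?thesis by simp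
qed

lemma hereditary_game_ideal_aone:
  assumes m: "0 < m" "m < n" and V: "hereditary n m V" "game_ideal (K n) (K m) \<subseteq> V"
  shows "aone \<in> V"
proof -
  let ?P = "asum {..<m} (\<lambda>a. amult m (colour_defect n m a) (colour_defect n m a))"
  let ?f = "ascale (of_real (real (n - m))) aone"
  have clashes: "colour_clashes n m = aadd ?P ?f"
    using m by (simp add: colour_clashes_eq of_nat_diff)
  have P: "?P \<in> pos_cone n m"
    using pos_cone_asum_squares[of "{..<m}" "colour_defect n m" n m]
    by (simp add: astar_colour_defect[OF m(1)] colour_defect_Alg[OF m(1)])
  have "selfadj m ?P"
    using selfadj_square_colour_defect[OF m(1)] by (simp add: selfadj_def astar_asum)
  moreover have f: "selfadj m ?f"
    by (simp add: selfadj_def astar_ascale astar_aone)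
  ultimately have "selfadj m (colour_clashes n m)"
    unfolding clashes by (simp add: selfadj_def astar_aadd)
  moreover have "asub (colour_clashes n m) ?f = ?P"
    unfolding clashes by (simp add: fun_eq_iff asub_def aadd_def)
  ultimately have "?f \<in> V"
    using hereditary_dominated[OF V(1) Alg_ascale[OF Alg_aone] f pos_cone_scaled_aone
        colour_clashes_mem[OF V]] P by simp
  then have "ascale (1 / of_nat (n - m)) ?f \<in> V"
    by (rule hereditary_ascale[OF V(1)])
  then show ?thesis
    using m by (simp add: ascale_def fun_eq_iff)
qed

lemma not_hered_hom_K:
  assumes "1 \<le> m" "m < n"
  shows "\<not> hered_hom (K n) (K m)"
proof -
  have m: "0 < m" using assms by simp
  have "hered_ideal (K n) (K m) \<subseteq> Alg n m"
    using hered_ideal_subset[of "K n" "K m" "Alg n m"] game_ideal_subset_Alg[of "K m" "K n"] m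
      hereditary_Alg by simp
  moreover have "Alg n m \<subseteq> V"
    if "hereditary n m V" "game_ideal (K n) (K m) \<subseteq> V" for V
    using hereditary_aone_imp_Alg[OF that(1) hereditary_game_ideal_aone[OF m assms(2) that]] .
  then have "Alg n m \<subseteq> hered_ideal (K n) (K m)"
    unfolding hered_ideal_def by auto
  ultimately show ?thesis
    unfolding hered_hom_def by auto
qed

theorem mainTheorem12:
  shows "(\<forall>n c. 1 \<le> n \<longrightarrow> 1 \<le> c \<longrightarrow> hered_hom (K n) (K c) \<longrightarrow> n \<le> c) \<and>
         (\<forall>n. 1 \<le> n \<longrightarrow> chi_hered (K n) = n)"
proof -
  have le: "n \<le> c" if "1 \<le> c" "hered_hom (K n) (K c)" for n c
    using not_hered_hom_K[OF that(1)] that(2) by (meson not_le)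
  have "chi_hered (K n) = n" if "1 \<le> n" for n
    unfolding chi_hered_def
    by (rule Least_equality) (use that hered_hom_K_self le in auto)
  with le show ?thesis by blast
qed

end
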